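(* Let $\alpha\in(0,1)$ and let $0=t_0<t_1<\cdots$ be arbitrary time levels with $\tau_k=t_k-t_{k-1}$ and $r_k=\tau_k/\tau_{k-1}$ ($k\ge2$). Then for $n\ge2$: (i) $\eta^{(n)}_{n-k}<\eta^{(n-1)}_{n-k-1}$ for $1\le k\le n-1$; (ii) $\eta^{(n)}_{n-k-1}>r_{k+1}\eta^{(n)}_{n-k}$ for $1\le k\le n-1$, and $$\eta^{(n)}_{n-k-1}-r_{k+1}\eta^{(n)}_{n-k}<\eta^{(n-1)}_{n-k-2}-r_{k+1}\eta^{(n-1)}_{n-k-1}\quad\text{for }1\le k\le n-2.$$
   Context: $\omega_{1-\alpha}(t):=t^{-\alpha}/\Gamma(1-\alpha)$; $\eta^{(n)}_{n-k}:=\frac{2}{\tau_k}\int_{t_{k-1}}^{t_k}\frac{s-t_{k-1/2}}{\tau_k}\omega_{1-\alpha}(t_n-s)\,ds$ for $1\le k\le n$, where $t_{k-1/2}=(t_k+t_{k-1})/2$. *)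

theory Defs
  imports "HOL-Analysis.Analysis"
begin

definition omega :: "real \<Rightarrow> real \<Rightarrow> real" where
  "omega \<alpha> x = x powr (-\<alpha>) / Gamma (1 - \<alpha>)"

definition tau :: "(nat \<Rightarrow> real) \<Rightarrow> nat \<Rightarrow> real" where
  "tau t k = t k - t (k - 1)"

definition ratio :: "(nat \<Rightarrow> real) \<Rightarrow> nat \<Rightarrow> real" where
  "ratio t k = tau t k / tau t (k - 1)"

(* eta t alpha n k  is  eta^{(n)}_{n-k}  of the paper (1 <= k <= n) *)
definition eta :: "(nat \<Rightarrow> real) \<Rightarrow> real \<Rightarrow> nat \<Rightarrow> nat \<Rightarrow> real" where
  "eta t \<alpha> n k = 2 / tau t k *
     integral {t (k - 1) .. t k}
       (\<lambda>s. (s - (t k + t (k - 1)) / 2) / tau t k * omega \<alpha> (t n - s))"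

end

theory Submission
  imports Defs
begin

text \<open>
  Substituting \<open>u = t n - s\<close> gives
  \<open>eta t \<alpha> n k = 2 / (\<Gamma>(1 - \<alpha>) \<tau>\<^sub>k\<^sup>2) K(t n - t k, t n - t (k - 1))\<close>, where
  \<open>K(x, y) = \<integral>\<^sub>x\<^sup>y ((x + y)/2 - u) \<phi>(u) du\<close> and \<open>\<phi>(u) = u powr -\<alpha>\<close>.
  Passing from level \<open>n - 1\<close> to level \<open>n\<close> shifts both arguments of \<open>K\<close> by \<open>\<tau>\<^sub>n\<close>;
  the derivative of \<open>K\<close> along such a shift is the error of the trapezoidal rule for
  \<open>\<integral>\<^sub>x\<^sup>y \<phi>\<close>, which is negative because \<open>\<phi>\<close> is convex. This gives (i).
  For (ii) and (iii), with \<open>c < a < b\<close> the distances from \<open>t n\<close> to \<open>t (k + 1)\<close>, \<open>t k\<close>, \<open>t (k - 1)\<close>,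
  \<open>eta t \<alpha> n (k + 1) - r\<^sub>k\<^sub>+\<^sub>1 eta t \<alpha> n k = 2 \<tau>\<^sub>k\<^sub>+\<^sub>1 / \<Gamma>(1 - \<alpha>) (K(c, a)/(a - c)\<^sup>3 - K(a, b)/(b - a)\<^sup>3)\<close>.
  Taylor-type bounds give \<open>K(c, a)/(a - c)\<^sup>3 > -\<phi>'(a)/12 > K(a, b)/(b - a)\<^sup>3\<close>, which is (ii),
  and bound the shift derivative of the bracket by \<open>-\<phi>''(a)/12 + \<phi>''(a)/12 = 0\<close>, which is (iii).
  The estimates only use that \<open>-\<phi>'\<close> and \<open>\<phi>''\<close> are strictly decreasing.
\<close>

lemma decreasing_if_deriv_neg:
  fixes f f' :: "real \<Rightarrow> real"
  assumes "a < b" "continuous_on {a..b} f"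
    and "\<And>z. a < z \<Longrightarrow> z < b \<Longrightarrow> (f has_real_derivative f' z) (at z)"
    and "\<And>z. a < z \<Longrightarrow> z < b \<Longrightarrow> f' z < 0"
  shows "f b < f a"
  by (rule DERIV_neg_imp_decreasing_open[OF assms(1) _ assms(2)]) (use assms(3,4) in blast)

lemma increasing_if_deriv_pos:
  fixes f f' :: "real \<Rightarrow> real"
  assumes "a < b" "continuous_on {a..b} f"
    and "\<And>z. a < z \<Longrightarrow> z < b \<Longrightarrow> (f has_real_derivative f' z) (at z)"
    and "\<And>z. a < z \<Longrightarrow> z < b \<Longrightarrow> 0 < f' z"
  shows "f a < f b"
  by (rule DERIV_pos_imp_increasing_open[OF assms(1) _ assms(2)]) (use assms(3,4) in blast)

lemma continuous_on_if_deriv: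
  fixes f f' :: "real \<Rightarrow> real"
  assumes "\<And>z. a \<le> z \<Longrightarrow> z \<le> b \<Longrightarrow> (f has_real_derivative f' z) (at z)"
  shows "continuous_on {a..b} f"
proof (rule continuous_at_imp_continuous_on, rule ballI)
  fix z assume "z \<in> {a..b}"
  then show "isCont f z" using assms[of z] by (auto intro: DERIV_isCont)
qed

lemma decreasing_if_deriv_neg_closed:
  fixes f f' :: "real \<Rightarrow> real"
  assumes "a < b"
    and "\<And>z. a \<le> z \<Longrightarrow> z \<le> b \<Longrightarrow> (f has_real_derivative f' z) (at z)"
    and "\<And>z. a < z \<Longrightarrow> z < b \<Longrightarrow> f' z < 0"
  shows "f b < f a"
  by (rule decreasing_if_deriv_neg[where f' = f', OF assms(1) continuous_on_if_deriv[OF assms(2)]])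
    (use assms in auto)

lemma increasing_if_deriv_pos_closed:
  fixes f f' :: "real \<Rightarrow> real"
  assumes "a < b"
    and "\<And>z. a \<le> z \<Longrightarrow> z \<le> b \<Longrightarrow> (f has_real_derivative f' z) (at z)"
    and "\<And>z. a < z \<Longrightarrow> z < b \<Longrightarrow> 0 < f' z"
  shows "f a < f b"
  by (rule increasing_if_deriv_pos[where f' = f', OF assms(1) continuous_on_if_deriv[OF assms(2)]])
    (use assms in auto)

locale convex_kernel =
  fixes P Q \<phi> \<psi> \<rho> :: "real \<Rightarrow> real"
  assumes continuous_P: "continuous_on {0..} P"
    and continuous_Q: "continuous_on {0..} Q"
    and P_deriv: "0 < x \<Longrightarrow> (P has_real_derivative \<phi> x) (at x)"
    and Q_deriv: "0 < x \<Longrightarrow> (Q has_real_derivative x * \<phi> x) (at x)"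
    and \<phi>_deriv: "0 < x \<Longrightarrow> (\<phi> has_real_derivative - \<psi> x) (at x)"
    and \<psi>_deriv: "0 < x \<Longrightarrow> (\<psi> has_real_derivative - \<rho> x) (at x)"
    and \<psi>_decreasing: "0 < x \<Longrightarrow> x < y \<Longrightarrow> \<psi> y < \<psi> x"
    and \<rho>_decreasing: "0 < x \<Longrightarrow> x < y \<Longrightarrow> \<rho> y < \<rho> x"
begin

lemma P_chain [derivative_intros]:
  "(g has_real_derivative g') (at x within S) \<Longrightarrow> 0 < g x \<Longrightarrow>
    ((\<lambda>x. P (g x)) has_real_derivative \<phi> (g x) * g') (at x within S)"
  by (rule DERIV_chain2[OF P_deriv])

lemma Q_chain [derivative_intros]:
  "(g has_real_derivative g') (at x within S) \<Longrightarrow> 0 < g x \<Longrightarrow>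
    ((\<lambda>x. Q (g x)) has_real_derivative g x * \<phi> (g x) * g') (at x within S)"
  by (rule DERIV_chain2[OF Q_deriv])

lemma \<phi>_chain [derivative_intros]:
  "(g has_real_derivative g') (at x within S) \<Longrightarrow> 0 < g x \<Longrightarrow>
    ((\<lambda>x. \<phi> (g x)) has_real_derivative - \<psi> (g x) * g') (at x within S)"
  by (rule DERIV_chain2[OF \<phi>_deriv])

lemma \<psi>_chain [derivative_intros]:
  "(g has_real_derivative g') (at x within S) \<Longrightarrow> 0 < g x \<Longrightarrow>
    ((\<lambda>x. \<psi> (g x)) has_real_derivative - \<rho> (g x) * g') (at x within S)"
  by (rule DERIV_chain2[OF \<psi>_deriv])

lemma continuous_on_P_comp:
  "continuous_on S g \<Longrightarrow> \<forall>x\<in>S. 0 \<le> g x \<Longrightarrow> continuous_on S (\<lambda>x. P (g x))"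
  by (rule continuous_on_compose2[OF continuous_P]) auto

lemma continuous_on_Q_comp:
  "continuous_on S g \<Longrightarrow> \<forall>x\<in>S. 0 \<le> g x \<Longrightarrow> continuous_on S (\<lambda>x. Q (g x))"
  by (rule continuous_on_compose2[OF continuous_Q]) auto

text \<open>\<open>centred_moment x y = \<integral>\<^sub>x\<^sup>y ((x + y)/2 - u) \<phi>(u) du\<close>.\<close>

definition centred_moment :: "real \<Rightarrow> real \<Rightarrow> real" where
  "centred_moment x y = (x + y) / 2 * (P y - P x) - (Q y - Q x)"

definition trapezoid_defect :: "real \<Rightarrow> real \<Rightarrow> real" where
  "trapezoid_defect x y = P y - P x - (y - x) * (\<phi> x + \<phi> y) / 2"

definition moment_gap :: "real \<Rightarrow> real \<Rightarrow> real \<Rightarrow> real" where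
  "moment_gap c a b = centred_moment c a / (a - c) ^ 3 - centred_moment a b / (b - a) ^ 3"

lemma continuous_on_centred_moment_comp:
  assumes "continuous_on S g" "continuous_on S h" "\<forall>x\<in>S. 0 \<le> g x" "\<forall>x\<in>S. 0 \<le> h x"
  shows "continuous_on S (\<lambda>x. centred_moment (g x) (h x))"
  unfolding centred_moment_def using assms
  by (intro continuous_intros continuous_on_P_comp continuous_on_Q_comp) auto

lemma \<phi>_diff_gt_tangent:
  assumes "0 < x" "x < y"
  shows "\<psi> y * (y - x) < \<phi> x - \<phi> y"
proof -
  let ?f = "\<lambda>z. \<phi> z - \<phi> y - \<psi> y * (y - z)"
  have "?f y < ?f x"
  proof (rule decreasing_if_deriv_neg_closed[where f = ?f and f' = "\<lambda>z. \<psi> y - \<psi> z"])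
    fix z assume "x \<le> z" "z \<le> y"
    then show "(?f has_real_derivative \<psi> y - \<psi> z) (at z)"
      using assms by (auto intro!: derivative_eq_intros)
  next
    fix z assume "x < z" "z < y"
    then show "\<psi> y - \<psi> z < 0" using assms \<psi>_decreasing[of z y] by auto
  qed (use assms in auto)
  then show ?thesis by simp
qed

lemma trapezoid_defect_neg:
  assumes "0 < x" "x < y"
  shows "trapezoid_defect x y < 0"
proof -
  have "trapezoid_defect x y < trapezoid_defect x x"
  proof (rule decreasing_if_deriv_neg_closed
      [where f = "trapezoid_defect x" and f' = "\<lambda>w. (\<phi> w - \<phi> x + (w - x) * \<psi> w) / 2"])
    fix z assume "x \<le> z" "z \<le> y"
    then show "(trapezoid_defect x has_real_derivative (\<phi> z - \<phi> x + (z - x) * \<psi> z) / 2) (at z)"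
      using assms unfolding trapezoid_defect_def by (auto intro!: derivative_eq_intros simp: field_simps)
  next
    fix z assume "x < z" "z < y"
    then show "(\<phi> z - \<phi> x + (z - x) * \<psi> z) / 2 < 0"
      using assms \<phi>_diff_gt_tangent[of x z] by (simp add: mult.commute)
  qed (use assms in auto)
  then show ?thesis by (simp add: trapezoid_defect_def)
qed

lemma centred_moment_shift_deriv:
  assumes "0 < x + e" "x \<le> y"
  shows "((\<lambda>e. centred_moment (x + e) (y + e)) has_real_derivative
    trapezoid_defect (x + e) (y + e)) (at e)"
  unfolding centred_moment_def trapezoid_defect_def using assms
  by (auto intro!: derivative_eq_intros simp: field_simps)

lemma centred_moment_shift_less:
  assumes "0 \<le> a" "a < b" "0 < d"
  shows "centred_moment (a + d) (b + d) < centred_moment a b"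
proof -
  let ?K = "\<lambda>e. centred_moment (a + e) (b + e)"
  have "?K d < ?K 0"
  proof (rule decreasing_if_deriv_neg[where f = ?K and f' = "\<lambda>e. trapezoid_defect (a + e) (b + e)"])
    show "continuous_on {0..d} ?K"
      using assms by (intro continuous_on_centred_moment_comp continuous_intros) auto
  next
    fix z assume "0 < z" "z < d"
    then show "(?K has_real_derivative trapezoid_defect (a + z) (b + z)) (at z)"
      using assms by (intro centred_moment_shift_deriv) auto
    show "trapezoid_defect (a + z) (b + z) < 0"
      using trapezoid_defect_neg[of "a + z" "b + z"] assms \<open>0 < z\<close> by auto
  qed (use assms in auto)
  then show ?thesis by simp
qed

lemma centred_moment_less_\<psi>_left:
  assumes "0 < a" "a < b"
  shows "12 * centred_moment a b < (b - a) ^ 3 * \<psi> a"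
proof -
  define g where "g w = (w - a)\<^sup>2 * \<psi> a / 4 - (P w - P a) / 2 + (w - a) * \<phi> w / 2" for w
  have g_pos: "0 < g w" if "a < w" for w
  proof -
    have "g a < g w"
    proof (rule increasing_if_deriv_pos_closed[where f = g and f' = "\<lambda>z. (z - a) * (\<psi> a - \<psi> z) / 2"])
      fix z assume "a \<le> z" "z \<le> w"
      then show "(g has_real_derivative (z - a) * (\<psi> a - \<psi> z) / 2) (at z)"
        using assms unfolding g_def by (auto intro!: derivative_eq_intros simp: field_simps)
    next
      fix z assume "a < z" "z < w"
      then show "0 < (z - a) * (\<psi> a - \<psi> z) / 2" using assms \<psi>_decreasing[of a z] by auto
    qed (use that in auto)
    then show ?thesis by (simp add: g_def)
  qed
  let ?f = "\<lambda>w. (w - a) ^ 3 * \<psi> a / 12 - centred_moment a w"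
  have "?f a < ?f b"
  proof (rule increasing_if_deriv_pos_closed[where f = ?f and f' = g])
    fix z assume "a \<le> z" "z \<le> b"
    then show "(?f has_real_derivative g z) (at z)"
      using assms unfolding g_def centred_moment_def
      by (auto intro!: derivative_eq_intros simp: field_simps power2_eq_square)
  qed (use assms g_pos in auto)
  then show ?thesis by (simp add: centred_moment_def)
qed

lemma \<psi>_right_less_centred_moment:
  assumes "0 \<le> c" "c < a"
  shows "(a - c) ^ 3 * \<psi> a < 12 * centred_moment c a"
proof -
  define g where "g x = (P a - P x) / 2 - (a - x) * \<phi> x / 2 + (a - x)\<^sup>2 * \<psi> a / 4" for x
  have g_neg: "g x < 0" if "0 < x" "x < a" for x
  proof -
    have "g x < g a"
    proof (rule increasing_if_deriv_pos_closed[where f = g and f' = "\<lambda>z. (a - z) * (\<psi> z - \<psi> a) / 2"])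
      fix z assume "x \<le> z" "z \<le> a"
      then show "(g has_real_derivative (a - z) * (\<psi> z - \<psi> a) / 2) (at z)"
        using that unfolding g_def by (auto intro!: derivative_eq_intros simp: field_simps power2_eq_square)
    next
      fix z assume "x < z" "z < a"
      then show "0 < (a - z) * (\<psi> z - \<psi> a) / 2" using that \<psi>_decreasing[of z a] by auto
    qed (use that in auto)
    then show ?thesis by (simp add: g_def)
  qed
  let ?f = "\<lambda>x. centred_moment x a - (a - x) ^ 3 * \<psi> a / 12"
  have "?f a < ?f c"
  proof (rule decreasing_if_deriv_neg[where f = ?f and f' = g])
    show "continuous_on {c..a} ?f"
      using assms by (intro continuous_on_centred_moment_comp continuous_intros) auto
  next
    fix z assume "c < z" "z < a"
    then show "(?f has_real_derivative g z) (at z)"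
      using assms unfolding g_def centred_moment_def
      by (auto intro!: derivative_eq_intros simp: field_simps power2_eq_square)
    show "g z < 0" using g_neg \<open>c < z\<close> \<open>z < a\<close> assms by auto
  qed (use assms in auto)
  then show ?thesis by (simp add: centred_moment_def)
qed

lemma trapezoid_defect_greater_\<rho>_left:
  assumes "0 < y" "y < z"
  shows "- ((z - y) ^ 3 * \<rho> y / 12) < trapezoid_defect y z"
proof -
  define g where "g w = (\<phi> w - \<phi> y) / 2 + (w - y) * \<psi> w / 2 + (w - y)\<^sup>2 * \<rho> y / 4" for w
  have g_pos: "0 < g w" if "y < w" for w
  proof -
    have "g y < g w"
    proof (rule increasing_if_deriv_pos_closed[where f = g and f' = "\<lambda>v. (v - y) * (\<rho> y - \<rho> v) / 2"])
      fix v assume "y \<le> v" "v \<le> w"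
      then show "(g has_real_derivative (v - y) * (\<rho> y - \<rho> v) / 2) (at v)"
        using assms unfolding g_def by (auto intro!: derivative_eq_intros simp: field_simps power2_eq_square)
    next
      fix v assume "y < v" "v < w"
      then show "0 < (v - y) * (\<rho> y - \<rho> v) / 2" using assms \<rho>_decreasing[of y v] by auto
    qed (use that in auto)
    then show ?thesis by (simp add: g_def)
  qed
  let ?f = "\<lambda>w. trapezoid_defect y w + (w - y) ^ 3 * \<rho> y / 12"
  have "?f y < ?f z"
  proof (rule increasing_if_deriv_pos_closed[where f = ?f and f' = g])
    fix v assume "y \<le> v" "v \<le> z"
    then show "(?f has_real_derivative g v) (at v)"
      using assms unfolding g_def trapezoid_defect_def
      by (auto intro!: derivative_eq_intros simp: field_simps power2_eq_square)
  qed (use assms g_pos in auto)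
  then show ?thesis by (simp add: trapezoid_defect_def)
qed

lemma trapezoid_defect_less_\<rho>_right:
  assumes "0 < x" "x < y"
  shows "trapezoid_defect x y < - ((y - x) ^ 3 * \<rho> y / 12)"
proof -
  define g where "g v = (\<phi> y - \<phi> v) / 2 + (y - v) * \<psi> v / 2 - (y - v)\<^sup>2 * \<rho> y / 4" for v
  have g_pos: "0 < g v" if "0 < v" "v < y" for v
  proof -
    have "g y < g v"
    proof (rule decreasing_if_deriv_neg_closed[where f = g and f' = "\<lambda>u. (y - u) * (\<rho> y - \<rho> u) / 2"])
      fix u assume "v \<le> u" "u \<le> y"
      then show "(g has_real_derivative (y - u) * (\<rho> y - \<rho> u) / 2) (at u)"
        using that unfolding g_def by (auto intro!: derivative_eq_intros simp: field_simps power2_eq_square)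
    next
      fix u assume "v < u" "u < y"
      with that have "(y - u) * (\<rho> y - \<rho> u) < 0"
        using \<rho>_decreasing[of u y] by (intro mult_pos_neg) auto
      then show "(y - u) * (\<rho> y - \<rho> u) / 2 < 0" by simp
    qed (use that in auto)
    then show ?thesis by (simp add: g_def)
  qed
  let ?f = "\<lambda>v. trapezoid_defect v y + (y - v) ^ 3 * \<rho> y / 12"
  have "?f x < ?f y"
  proof (rule increasing_if_deriv_pos_closed[where f = ?f and f' = g])
    fix v assume "x \<le> v" "v \<le> y"
    then show "(?f has_real_derivative g v) (at v)"
      using assms unfolding g_def trapezoid_defect_def
      by (auto intro!: derivative_eq_intros simp: field_simps power2_eq_square)
  qed (use assms g_pos in auto)
  then show ?thesis by (simp add: trapezoid_defect_def)
qed

lemma moment_gap_pos: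
  assumes "0 \<le> c" "c < a" "a < b"
  shows "0 < moment_gap c a b"
proof -
  have "\<psi> a / 12 < centred_moment c a / (a - c) ^ 3"
    using \<psi>_right_less_centred_moment[OF assms(1,2)] assms by (simp add: field_simps)
  moreover have "centred_moment a b / (b - a) ^ 3 < \<psi> a / 12"
    using centred_moment_less_\<psi>_left[of a b] assms by (simp add: field_simps)
  ultimately show ?thesis unfolding moment_gap_def by linarith
qed

lemma moment_gap_shift_less:
  assumes "0 \<le> c" "c < a" "a < b" "0 < d"
  shows "moment_gap (c + d) (a + d) (b + d) < moment_gap c a b"
proof -
  let ?D = "\<lambda>e. moment_gap (c + e) (a + e) (b + e)"
  let ?D' = "\<lambda>e. trapezoid_defect (c + e) (a + e) / (a - c) ^ 3
    - trapezoid_defect (a + e) (b + e) / (b - a) ^ 3"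
  have "?D d < ?D 0"
  proof (rule decreasing_if_deriv_neg[where f = ?D and f' = ?D'])
    show "continuous_on {0..d} ?D"
      unfolding moment_gap_def using assms
      by (intro continuous_on_centred_moment_comp continuous_intros) auto
  next
    fix z assume z: "0 < z" "z < d"
    have "((\<lambda>e. centred_moment (c + e) (a + e)) has_real_derivative trapezoid_defect (c + z) (a + z)) (at z)"
      "((\<lambda>e. centred_moment (a + e) (b + e)) has_real_derivative trapezoid_defect (a + z) (b + z)) (at z)"
      using assms z by (auto intro: centred_moment_shift_deriv)
    then show "(?D has_real_derivative ?D' z) (at z)"
      by (simp add: moment_gap_def) (intro DERIV_diff DERIV_cdivide)
    have "trapezoid_defect (c + z) (a + z) / (a - c) ^ 3 < - \<rho> (a + z) / 12"
      using trapezoid_defect_less_\<rho>_right[of "c + z" "a + z"] assms z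
      by (simp add: field_simps)
    moreover have "- \<rho> (a + z) / 12 < trapezoid_defect (a + z) (b + z) / (b - a) ^ 3"
      using trapezoid_defect_greater_\<rho>_left[of "a + z" "b + z"] assms z
      by (simp add: field_simps)
    ultimately show "?D' z < 0" by linarith
  qed (use assms in auto)
  then show ?thesis by simp
qed

end

lemma power_convex_kernel:
  fixes \<alpha> :: real
  assumes "0 < \<alpha>" "\<alpha> < 1"
  shows "convex_kernel (\<lambda>u. u powr (1 - \<alpha>) / (1 - \<alpha>)) (\<lambda>u. u powr (2 - \<alpha>) / (2 - \<alpha>))
    (\<lambda>u. u powr - \<alpha>) (\<lambda>u. \<alpha> * u powr (- \<alpha> - 1)) (\<lambda>u. \<alpha> * (\<alpha> + 1) * u powr (- \<alpha> - 2))"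
proof
  show "continuous_on {0..} (\<lambda>u. u powr (1 - \<alpha>) / (1 - \<alpha>))"
    "continuous_on {0..} (\<lambda>u. u powr (2 - \<alpha>) / (2 - \<alpha>))"
    using assms by (auto intro!: continuous_intros continuous_on_powr')
next
  fix x y :: real
  assume x: "0 < x"
  show "((\<lambda>u. u powr (1 - \<alpha>) / (1 - \<alpha>)) has_real_derivative x powr - \<alpha>) (at x)"
    using assms x by (auto intro!: derivative_eq_intros)
  have "x powr (1 - \<alpha>) = x * x powr - \<alpha>"
    using x powr_add[of x 1 "- \<alpha>"] by simp
  then show "((\<lambda>u. u powr (2 - \<alpha>) / (2 - \<alpha>)) has_real_derivative x * x powr - \<alpha>) (at x)"
    using assms x by (auto intro!: derivative_eq_intros)
  show "((\<lambda>u. u powr - \<alpha>) has_real_derivative - (\<alpha> * x powr (- \<alpha> - 1))) (at x)"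
    using assms x by (auto intro!: derivative_eq_intros)
  show "((\<lambda>u. \<alpha> * u powr (- \<alpha> - 1)) has_real_derivative - (\<alpha> * (\<alpha> + 1) * x powr (- \<alpha> - 2))) (at x)"
    using assms x by (auto intro!: derivative_eq_intros simp: algebra_simps)
  assume "x < y"
  then show "\<alpha> * y powr (- \<alpha> - 1) < \<alpha> * x powr (- \<alpha> - 1)"
    "\<alpha> * (\<alpha> + 1) * y powr (- \<alpha> - 2) < \<alpha> * (\<alpha> + 1) * x powr (- \<alpha> - 2)"
    using assms x by (simp_all add: powr_less_mono2_neg)
qed

lemma tau_pos: "strict_mono t \<Longrightarrow> 1 \<le> k \<Longrightarrow> 0 < tau t k"
  unfolding tau_def by (simp add: strict_mono_less)

context
  fixes \<alpha> :: real
  assumes \<alpha>_pos: "0 < \<alpha>" and \<alpha>_less_1: "\<alpha> < 1"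
begin

interpretation power: convex_kernel "\<lambda>u. u powr (1 - \<alpha>) / (1 - \<alpha>)" "\<lambda>u. u powr (2 - \<alpha>) / (2 - \<alpha>)"
  "\<lambda>u. u powr - \<alpha>" "\<lambda>u. \<alpha> * u powr (- \<alpha> - 1)" "\<lambda>u. \<alpha> * (\<alpha> + 1) * u powr (- \<alpha> - 2)"
  using power_convex_kernel[OF \<alpha>_pos \<alpha>_less_1] .

lemma Gamma_one_minus_pos: "0 < Gamma (1 - \<alpha>)"
  using \<alpha>_less_1 by (simp add: Gamma_real_pos)

lemma eta_eq_centred_moment:
  assumes "strict_mono t" "1 \<le> j" "j \<le> n"
  shows "eta t \<alpha> n j
    = 2 / (Gamma (1 - \<alpha>) * tau t j ^ 2) * power.centred_moment (t n - t j) (t n - t (j - 1))"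
proof -
  define T lo hi where "T = t n" and "lo = t (j - 1)" and "hi = t j"
  define m \<tau> \<Gamma> where "m = (hi + lo) / 2" and "\<tau> = hi - lo" and "\<Gamma> = Gamma (1 - \<alpha>)"
  have \<Gamma>_pos: "0 < \<Gamma>"
    unfolding \<Gamma>_def by (rule Gamma_one_minus_pos)
  have lo_hi: "lo < hi" and hi_T: "hi \<le> T"
    unfolding lo_def hi_def T_def using assms by (simp_all add: strict_mono_less strict_mono_less_eq)
  have tau: "tau t j = \<tau>"
    unfolding tau_def \<tau>_def hi_def lo_def by simp
  define F where "F s = (- (T - m) * ((T - s) powr (1 - \<alpha>) / (1 - \<alpha>))
    + (T - s) powr (2 - \<alpha>) / (2 - \<alpha>)) / (\<tau> * \<Gamma>)" for s
  have integral: "((\<lambda>s. (s - (hi + lo) / 2) / \<tau> * omega \<alpha> (T - s)) has_integral (F hi - F lo)) {lo..hi}"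
  proof (rule fundamental_theorem_of_calculus_interior)
    show "continuous_on {lo..hi} F"
      unfolding F_def \<tau>_def using hi_T lo_hi \<Gamma>_pos \<alpha>_less_1
      by (auto intro!: continuous_intros continuous_on_powr')
  next
    fix s assume "s \<in> {lo<..<hi}"
    then have "0 < T - s" using hi_T by auto
    have reflect: "((\<lambda>s. T - s) has_real_derivative - 1) (at s)"
      by (auto intro!: derivative_eq_intros)
    have "(F has_real_derivative
        (- (T - m) * ((T - s) powr - \<alpha> * - 1) + (T - s) * (T - s) powr - \<alpha> * - 1) / (\<tau> * \<Gamma>)) (at s)"
      unfolding F_def using \<open>0 < T - s\<close>
      by (intro DERIV_cdivide DERIV_add DERIV_cmult power.P_chain[OF reflect] power.Q_chain[OF reflect])
    moreover have "(- (T - m) * ((T - s) powr - \<alpha> * - 1) + (T - s) * (T - s) powr - \<alpha> * - 1) / (\<tau> * \<Gamma>)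
        = (s - (hi + lo) / 2) / \<tau> * omega \<alpha> (T - s)"
      unfolding m_def omega_def \<Gamma>_def by (simp add: field_simps)
    ultimately show "(F has_vector_derivative (s - (hi + lo) / 2) / \<tau> * omega \<alpha> (T - s)) (at s)"
      by (simp add: has_real_derivative_iff_has_vector_derivative)
  qed (use lo_hi in simp)
  have "eta t \<alpha> n j = 2 / \<tau> * integral {lo..hi} (\<lambda>s. (s - (hi + lo) / 2) / \<tau> * omega \<alpha> (T - s))"
    by (simp add: eta_def tau T_def hi_def lo_def)
  also have "\<dots> = 2 / \<tau> * (F hi - F lo)"
    by (simp only: integral_unique[OF integral])
  also have "F hi - F lo = power.centred_moment (T - hi) (T - lo) / (\<tau> * \<Gamma>)"
  proof -
    have numerator: "(- (T - m) * p\<^sub>1 + q\<^sub>1) - (- (T - m) * p\<^sub>0 + q\<^sub>0)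
        = ((T - hi) + (T - lo)) / 2 * (p\<^sub>0 - p\<^sub>1) - (q\<^sub>0 - q\<^sub>1)" for p\<^sub>0 p\<^sub>1 q\<^sub>0 q\<^sub>1 :: real
      unfolding m_def by (simp add: field_simps)
    show ?thesis
      by (simp only: F_def diff_divide_distrib[symmetric] numerator power.centred_moment_def)
  qed
  also have "2 / \<tau> * (power.centred_moment (T - hi) (T - lo) / (\<tau> * \<Gamma>))
      = 2 / (\<Gamma> * \<tau> ^ 2) * power.centred_moment (T - hi) (T - lo)"
    by (simp add: power2_eq_square)
  finally show ?thesis
    unfolding tau T_def hi_def lo_def \<Gamma>_def .
qed

lemma eta_less_prev_level:
  assumes "strict_mono t" "1 \<le> k" "k < n"
  shows "eta t \<alpha> n k < eta t \<alpha> (n - 1) k"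
proof -
  have "power.centred_moment (t n - t k) (t n - t (k - 1))
      < power.centred_moment (t (n - 1) - t k) (t (n - 1) - t (k - 1))"
    using power.centred_moment_shift_less[of "t (n - 1) - t k" "t (n - 1) - t (k - 1)" "t n - t (n - 1)"]
      assms by (simp add: strict_mono_less strict_mono_less_eq)
  moreover have "0 < 2 / (Gamma (1 - \<alpha>) * tau t k ^ 2)"
    using tau_pos[OF assms(1,2)] Gamma_one_minus_pos by simp
  ultimately have "2 / (Gamma (1 - \<alpha>) * tau t k ^ 2) * power.centred_moment (t n - t k) (t n - t (k - 1))
      < 2 / (Gamma (1 - \<alpha>) * tau t k ^ 2) * power.centred_moment (t (n - 1) - t k) (t (n - 1) - t (k - 1))"
    by (rule mult_strict_left_mono)
  then show ?thesis
    using assms by (simp add: eta_eq_centred_moment)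
qed

lemma eta_diff_ratio_eq_moment_gap:
  assumes "strict_mono t" "1 \<le> k" "k < m"
  shows "eta t \<alpha> m (k + 1) - ratio t (k + 1) * eta t \<alpha> m k
    = 2 * tau t (k + 1) / Gamma (1 - \<alpha>) * power.moment_gap (t m - t (k + 1)) (t m - t k) (t m - t (k - 1))"
proof -
  define c a b where "c = t m - t (k + 1)" and "a = t m - t k" and "b = t m - t (k - 1)"
  define \<Gamma> where "\<Gamma> = Gamma (1 - \<alpha>)"
  have tau: "tau t (k + 1) = a - c" "tau t k = b - a"
    unfolding tau_def a_def b_def c_def by simp_all
  have pos: "0 < a - c" "0 < b - a" "0 < \<Gamma>"
    unfolding a_def b_def c_def \<Gamma>_def using assms Gamma_one_minus_pos by (simp_all add: strict_mono_less)
  have ratio: "ratio t (k + 1) = (a - c) / (b - a)"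
    using tau by (simp add: ratio_def)
  have eta: "eta t \<alpha> m (k + 1) = 2 / (\<Gamma> * (a - c) ^ 2) * power.centred_moment c a"
    "eta t \<alpha> m k = 2 / (\<Gamma> * (b - a) ^ 2) * power.centred_moment a b"
    using assms eta_eq_centred_moment[of t "k + 1" m] eta_eq_centred_moment[of t k m]
    unfolding \<Gamma>_def tau a_def b_def c_def by simp_all
  have "2 / (\<Gamma> * u ^ 2) * K\<^sub>1 - u / v * (2 / (\<Gamma> * v ^ 2) * K\<^sub>2)
      = 2 * u / \<Gamma> * (K\<^sub>1 / u ^ 3 - K\<^sub>2 / v ^ 3)" if "0 < u" "0 < v" for u v K\<^sub>1 K\<^sub>2 :: real
    using that pos(3) by (simp add: field_simps power2_eq_square power3_eq_cube)
  then show ?thesis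
    unfolding ratio eta tau(1) power.moment_gap_def
      a_def[symmetric] b_def[symmetric] c_def[symmetric] \<Gamma>_def[symmetric]
    using pos by simp
qed

lemma ratio_eta_less_eta:
  assumes "strict_mono t" "1 \<le> k" "k < n"
  shows "ratio t (k + 1) * eta t \<alpha> n k < eta t \<alpha> n (k + 1)"
proof -
  have "0 < 2 * tau t (k + 1) / Gamma (1 - \<alpha>)"
    using tau_pos[OF assms(1)] Gamma_one_minus_pos by simp
  moreover have "0 < power.moment_gap (t n - t (k + 1)) (t n - t k) (t n - t (k - 1))"
    using assms by (intro power.moment_gap_pos) (simp_all add: strict_mono_less strict_mono_less_eq)
  ultimately show ?thesis
    using eta_diff_ratio_eq_moment_gap[OF assms] mult_pos_pos by fastforce
qed

lemma eta_diff_ratio_less_prev_level: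
  assumes "strict_mono t" "1 \<le> k" "k + 1 < n"
  shows "eta t \<alpha> n (k + 1) - ratio t (k + 1) * eta t \<alpha> n k
    < eta t \<alpha> (n - 1) (k + 1) - ratio t (k + 1) * eta t \<alpha> (n - 1) k"
proof -
  have "power.moment_gap (t n - t (k + 1)) (t n - t k) (t n - t (k - 1))
      < power.moment_gap (t (n - 1) - t (k + 1)) (t (n - 1) - t k) (t (n - 1) - t (k - 1))"
    using power.moment_gap_shift_less[of "t (n - 1) - t (k + 1)" "t (n - 1) - t k"
        "t (n - 1) - t (k - 1)" "t n - t (n - 1)"]
      assms by (simp add: strict_mono_less strict_mono_less_eq)
  moreover have "0 < 2 * tau t (k + 1) / Gamma (1 - \<alpha>)"
    using tau_pos[OF assms(1)] Gamma_one_minus_pos by simp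
  ultimately have "2 * tau t (k + 1) / Gamma (1 - \<alpha>)
        * power.moment_gap (t n - t (k + 1)) (t n - t k) (t n - t (k - 1))
      < 2 * tau t (k + 1) / Gamma (1 - \<alpha>)
        * power.moment_gap (t (n - 1) - t (k + 1)) (t (n - 1) - t k) (t (n - 1) - t (k - 1))"
    by (rule mult_strict_left_mono)
  moreover have "k < n - 1"
    using assms(3) by simp
  ultimately show ?thesis
    using assms eta_diff_ratio_eq_moment_gap[OF assms(1,2)] by simp
qed

end

theorem lemma4p2:
  fixes t :: "nat \<Rightarrow> real" and \<alpha> :: real and n :: nat
  assumes "0 < \<alpha>" "\<alpha> < 1"
    and "t 0 = 0" "strict_mono t"
    and "2 \<le> n"
  shows "(\<forall>k. 1 \<le> k \<and> k \<le> n - 1 \<longrightarrow> eta t \<alpha> n k < eta t \<alpha> (n - 1) k)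
    \<and> (\<forall>k. 1 \<le> k \<and> k \<le> n - 1 \<longrightarrow> eta t \<alpha> n (k + 1) > ratio t (k + 1) * eta t \<alpha> n k)
    \<and> (\<forall>k. 1 \<le> k \<and> k \<le> n - 2 \<longrightarrow>
         eta t \<alpha> n (k + 1) - ratio t (k + 1) * eta t \<alpha> n k
           < eta t \<alpha> (n - 1) (k + 1) - ratio t (k + 1) * eta t \<alpha> (n - 1) k)"
  using assms eta_less_prev_level[OF assms(1,2,4)] ratio_eta_less_eta[OF assms(1,2,4)]
    eta_diff_ratio_less_prev_level[OF assms(1,2,4)]
  by auto

end
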